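(* Assume all hypotheses (i)–(v) of the following setting hold: (i) $(x,y)$ follow the IMCA model with parameters $(h,T,\lambda,\mu)$; (ii) $h:\mathbb{R}^d\to\mathbb{R}^d$ is invertible; (iii) each $T_i$ is differentiable and satisfies the strong exponential condition; (iv) there exist $k+1$ points $y^0,\dots,y^k$ with $L=\big(\lambda(y^1)-\lambda(y^0),\dots,\lambda(y^k)-\lambda(y^0)\big)$ invertible; (v) there are $f:\mathbb{R}^d\to\mathbb{R}^d$, differentiable $H_l:\mathbb{R}\to\mathbb{R}^{m_l}$ with $(m_1,\dots,m_d)$ a permutation of $(k_1,\dots,k_d)$, and $g:\mathcal{Y}\to\mathbb{R}^k$ with $\exp(-H(f(x))^\top g(y))/Z(y)=p(x\mid y)$ for all $x,y$, where $H(f(x))=(H_1(f_1(x)),\dots,H_d(f_d(x)))$. Assume further either (A) each $T_l$ is twice differentiable with $k_l\ge 2$ for all $l$, and both $h$ and $f$ are $\mathcal{D}^2$-diffeomorphisms; or (B) $k_l=1$ and $T_l$ is non-monotonic for all $l$, $h$ and $f$ are $C^1$-diffeomorphisms, and each $H_l$ has a unique extremum. Then there exist a permutation $\gamma$ of $\{1,\dots,d\}$ with $m_i=k_{\gamma(i)}$, invertible square matrices $A_i$ and vectors $b_i$ such that for every $i$ and every $x$, $H_i(f_i(x))=A_iT_{\gamma(i)}(z_{\gamma(i)})+b_i$, where $z=h^{-1}(x)$.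
   Context: IMCA model: a latent $z\in\mathbb{R}^d$ and an observed auxiliary variable $y\in\mathcal{Y}\subset\mathbb{R}^{d_y}$, with $z\sim p(z\mid y)$ and observation $x=h(z)$, where $p(z\mid y)=\mu(z)\exp\big(\sum_{i=1}^d T_i(z_i)^\top\lambda_i(y)-\Gamma(y)\big)$; here $\mu$ is an arbitrary (not necessarily factorized) base measure density, $T_i:\mathbb{R}\to\mathbb{R}^{k_i}$ are sufficient statistics, $\lambda_i:\mathcal{Y}\to\mathbb{R}^{k_i}$, $\Gamma(y)$ is the log-normalizer, $k=\sum_i k_i$, $T=(T_1,\dots,T_d)$, $\lambda=(\lambda_1,\dots,\lambda_d)$ stacked into $\mathbb{R}^k$. The strong exponential condition for $T_i$: for every measurable $U\subset\mathbb{R}$ and every $\eta\in\mathbb{R}^{k_i}$, if $u\mapsto T_i(u)^\top\eta$ is constant on $U$, then $U$ has Lebesgue measure zero or $\eta=0$. A $\mathcal{D}^2$-diffeomorphism is an invertible map such that all second-order cross-derivatives of the map and its inverse exist. *)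

theory Defs
  imports "HOL-Analysis.Analysis" "HOL-Probability.Probability"
begin

text \<open>Block representation of vectors in R^k: a vector of R^k = R^(k_1+...+k_d) is
  represented as a family of blocks a i :: nat => real, of which only the entries j < n i
  of block i are meaningful.\<close>
definition blk_ip :: "('d::finite \<Rightarrow> nat) \<Rightarrow> ('d \<Rightarrow> nat \<Rightarrow> real) \<Rightarrow> ('d \<Rightarrow> nat \<Rightarrow> real) \<Rightarrow> real" where
  "blk_ip n a b = (\<Sum>i\<in>UNIV. \<Sum>j<n i. a i j * b i j)"

text \<open>The k x k matrix L whose columns (l = 1..K, K = sum of the n i) are the block vectors
  c l is invertible: it has a two-sided inverse matrix M (rows l = 1..K).\<close>
definition blk_matrix_invertible :: "('d::finite \<Rightarrow> nat) \<Rightarrow> (nat \<Rightarrow> 'd \<Rightarrow> nat \<Rightarrow> real) \<Rightarrow> bool" where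
  "blk_matrix_invertible n c =
    (let K = (\<Sum>i\<in>UNIV. n i) in
     \<exists>M :: nat \<Rightarrow> 'd \<Rightarrow> nat \<Rightarrow> real.
       (\<forall>i j i' j'. j < n i \<longrightarrow> j' < n i' \<longrightarrow>
          (\<Sum>l\<in>{1..K}. c l i j * M l i' j') = (if i = i' \<and> j = j' then 1 else 0)) \<and>
       (\<forall>l\<in>{1..K}. \<forall>l'\<in>{1..K}.
          (\<Sum>i\<in>UNIV. \<Sum>j<n i. M l i j * c l' i j) = (if l = l' then 1 else 0)))"

definition sq_invertible :: "nat \<Rightarrow> (nat \<Rightarrow> nat \<Rightarrow> real) \<Rightarrow> bool" where
  "sq_invertible n A =
    (\<exists>B. \<forall>j<n. \<forall>l<n. (\<Sum>r<n. A j r * B r l) = (if j = l then 1 else 0) \<and>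
                      (\<Sum>r<n. B j r * A r l) = (if j = l then 1 else 0))"

definition strong_exp_cond :: "nat \<Rightarrow> (real \<Rightarrow> nat \<Rightarrow> real) \<Rightarrow> bool" where
  "strong_exp_cond kk Ti =
    (\<forall>(U::real set) (\<eta>::nat \<Rightarrow> real). U \<in> sets lebesgue \<longrightarrow>
       (\<exists>c. \<forall>u\<in>U. (\<Sum>j<kk. Ti u j * \<eta> j) = c) \<longrightarrow>
       emeasure lebesgue U = 0 \<or> (\<forall>j<kk. \<eta> j = 0))"

definition vec_differentiable :: "nat \<Rightarrow> (real \<Rightarrow> nat \<Rightarrow> real) \<Rightarrow> bool" where
  "vec_differentiable n F = (\<forall>j<n. \<forall>u. (\<lambda>v. F v j) differentiable (at u))"

definition vec_twice_differentiable :: "nat \<Rightarrow> (real \<Rightarrow> nat \<Rightarrow> real) \<Rightarrow> bool" where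
  "vec_twice_differentiable n F =
    (\<forall>j<n. \<exists>F'. (\<forall>u. ((\<lambda>v. F v j) has_real_derivative F' u) (at u)) \<and>
                (\<forall>u. F' differentiable (at u)))"

definition C1_map :: "(real^'d \<Rightarrow> real^'d) \<Rightarrow> bool" where
  "C1_map G = (\<exists>J :: real^'d \<Rightarrow> real^'d^'d.
      (\<forall>x. (G has_derivative (\<lambda>v. J x *v v)) (at x)) \<and> continuous_on UNIV J)"

definition C1_diffeo :: "(real^'d \<Rightarrow> real^'d) \<Rightarrow> bool" where
  "C1_diffeo F = (bij F \<and> C1_map F \<and> C1_map (inv F))"

definition has_partial :: "(real^'d \<Rightarrow> real^'d) \<Rightarrow> 'd \<Rightarrow> 'd \<Rightarrow> real^'d \<Rightarrow> real \<Rightarrow> bool" where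
  "has_partial G a i x D = (((\<lambda>t. G (x + t *\<^sub>R axis i 1) $ a) has_real_derivative D) (at 0))"

definition second_cross_derivs_exist :: "(real^'d \<Rightarrow> real^'d) \<Rightarrow> bool" where
  "second_cross_derivs_exist G =
    (\<forall>a i j. i \<noteq> j \<longrightarrow>
       (\<exists>P. (\<forall>x. has_partial G a i x (P x)) \<and>
            (\<forall>x. \<exists>D. ((\<lambda>t. P (x + t *\<^sub>R axis j 1)) has_real_derivative D) (at 0))))"

definition D2_diffeo :: "(real^'d \<Rightarrow> real^'d) \<Rightarrow> bool" where
  "D2_diffeo F = (bij F \<and> (\<forall>x. F differentiable (at x)) \<and> (\<forall>x. inv F differentiable (at x)) \<and>
      second_cross_derivs_exist F \<and> second_cross_derivs_exist (inv F))"

definition is_local_extremum :: "(real \<Rightarrow> real) \<Rightarrow> real \<Rightarrow> bool" where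
  "is_local_extremum \<phi> u =
    ((\<exists>e>0. \<forall>v. \<bar>v - u\<bar> < e \<longrightarrow> \<phi> v \<le> \<phi> u) \<or> (\<exists>e>0. \<forall>v. \<bar>v - u\<bar> < e \<longrightarrow> \<phi> u \<le> \<phi> v))"

definition has_unique_extremum :: "(real \<Rightarrow> real) \<Rightarrow> bool" where
  "has_unique_extremum \<phi> = (\<exists>!u. is_local_extremum \<phi> u)"

end

theory Submission
  imports Defs "Jordan_Normal_Form.Determinant"
begin

text \<open>
  Comparing the densities of \<open>x\<close> at \<open>y\<^sup>l\<close> and \<open>y\<^sup>0\<close> identifies
  \<open>\<langle>T(z), \<lambda>(y\<^sup>l) - \<lambda>(y\<^sup>0)\<rangle>\<close> with \<open>-\<langle>H(f(x)), g(y\<^sup>l) - g(y\<^sup>0)\<rangle>\<close> up to a constant.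
  Inverting \<open>L\<close> makes \<open>T(z)\<close> an affine function of \<open>H(f(h z))\<close>; by the strong exponential
  condition this linear map has trivial left kernel, hence is invertible, and
  \<open>H(f(h z)) = C T(z) + b\<close>. Differentiating the \<open>i\<close>-th block row in \<open>z\<^sub>a\<close> gives
  \<open>H\<^sub>i'(w\<^sub>i) \<partial>\<^sub>a w\<^sub>i = C\<^sub>i\<^sub>a T\<^sub>a'(z\<^sub>a)\<close> with \<open>w = f \<circ> h\<close>.
  In case (A) all these vectors are proportional to one vector, so if two blocks contributed to row
  \<open>i\<close>, a nonzero vector orthogonal to it (possible as \<open>m\<^sub>i \<ge> 2\<close>) would lie in the left
  kernel of \<open>C\<close>. In case (B) the left side vanishes on the level set \<open>{w\<^sub>i = u}\<close> at an
  extremum \<open>u\<close> of \<open>H\<^sub>i\<close>; a contributing coordinate \<open>z\<^sub>a\<close> is then constant there, and two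
  of them would embed a hyperplane continuously and injectively into a subspace of codimension two.
  So every block row of \<open>C\<close> has a single nonzero block, and invertibility of \<open>C\<close> makes the
  block assignment a permutation.
\<close>

no_notation vec_index (infixl "$" 100)
unbundle no m_inv_syntax

section \<open>Block-indexed vectors\<close>

definition block_indices :: "('d::finite \<Rightarrow> nat) \<Rightarrow> ('d \<times> nat) set" where
  "block_indices n = (SIGMA i:UNIV. {..<n i})"

definition stacked :: "('d \<Rightarrow> real \<Rightarrow> nat \<Rightarrow> real) \<Rightarrow> real^'d \<Rightarrow> 'd \<times> nat \<Rightarrow> real" where
  "stacked F x = (\<lambda>(i, j). F i (x $ i) j)"

lemma stacked_apply [simp]: "stacked F x (i, j) = F i (x $ i) j"
  by (simp add: stacked_def)

lemma mem_block_indices [simp]: "(i, j) \<in> block_indices n \<longleftrightarrow> j < n i"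
  by (simp add: block_indices_def)

lemma finite_block_indices [simp]: "finite (block_indices n)"
  by (simp add: block_indices_def finite_SigmaI)

lemma sum_block_indices:
  "(\<Sum>p\<in>block_indices n. F p) = (\<Sum>i\<in>UNIV. \<Sum>j<n i. F (i, j))"
  unfolding block_indices_def by (subst sum.Sigma) (auto simp: split_def)

lemma sum_block_indices_single_block:
  assumes "\<And>i j. i \<noteq> c \<Longrightarrow> j < n i \<Longrightarrow> F (i, j) = 0"
  shows "(\<Sum>p\<in>block_indices n. F p) = (\<Sum>j<n c. F (c, j))"
proof -
  have "(\<Sum>p\<in>block_indices n. F p) = (\<Sum>j<n c. F (c, j)) + (\<Sum>i\<in>UNIV-{c}. \<Sum>j<n i. F (i, j))"
    by (simp add: sum_block_indices sum.remove)
  also have "(\<Sum>i\<in>UNIV-{c}. \<Sum>j<n i. F (i, j)) = 0"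
    using assms by (intro sum.neutral) auto
  finally show ?thesis by simp
qed

lemma card_block_indices: "card (block_indices n) = (\<Sum>i\<in>UNIV. n i)"
  by (simp add: block_indices_def card_SigmaI)

lemma card_block_indices_permute:
  assumes "bij \<sigma>" "\<And>i. m i = n (\<sigma> i)"
  shows "card (block_indices m) = card (block_indices n)"
  using sum.reindex_bij_betw[of \<sigma> UNIV UNIV n] assms by (simp add: card_block_indices bij_betw_def)

lemma blk_ip_block_indices: "blk_ip n a b = (\<Sum>(i, j)\<in>block_indices n. a i j * b i j)"
  by (simp add: blk_ip_def sum_block_indices)

lemma blk_ip_diff: "blk_ip n a (\<lambda>i j. b i j - b' i j) = blk_ip n a b - blk_ip n a b'"
  unfolding blk_ip_def by (simp add: right_diff_distrib sum_subtractf)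

section \<open>Matrices indexed by finite sets\<close>

definition inverse_matrices :: "'p set \<Rightarrow> 'q set \<Rightarrow> ('p \<Rightarrow> 'q \<Rightarrow> real) \<Rightarrow> ('q \<Rightarrow> 'p \<Rightarrow> real) \<Rightarrow> bool" where
  "inverse_matrices P Q B C \<longleftrightarrow>
     (\<forall>p\<in>P. \<forall>p'\<in>P. (\<Sum>q\<in>Q. B p q * C q p') = (if p = p' then 1 else 0)) \<and>
     (\<forall>q\<in>Q. \<forall>q'\<in>Q. (\<Sum>p\<in>P. C q p * B p q') = (if q = q' then 1 else 0))"

lemma solve_by_left_inverse:
  fixes c M :: "'l \<Rightarrow> 'p \<Rightarrow> real"
  assumes "finite P" "p \<in> P"
    and inverse: "\<forall>p\<in>P. \<forall>p'\<in>P. (\<Sum>l\<in>L. c l p * M l p') = (if p = p' then 1 else 0)"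
    and equations: "\<forall>l\<in>L. (\<Sum>p\<in>P. c l p * t p) = r l"
  shows "t p = (\<Sum>l\<in>L. M l p * r l)"
proof -
  have "t p = (\<Sum>p'\<in>P. t p' * (if p' = p then 1 else 0))"
    using assms(1,2) by (simp add: if_distrib cong: if_cong)
  also have "\<dots> = (\<Sum>p'\<in>P. t p' * (\<Sum>l\<in>L. c l p' * M l p))"
    using inverse assms(2) by (intro sum.cong) auto
  also have "\<dots> = (\<Sum>l\<in>L. M l p * (\<Sum>p'\<in>P. c l p' * t p'))"
    by (simp add: sum_distrib_left sum_distrib_right mult_ac) (rule sum.swap)
  also have "\<dots> = (\<Sum>l\<in>L. M l p * r l)"
    using equations by simp
  finally show ?thesis .
qed

lemma inverse_matrices_left_kernel:
  assumes "inverse_matrices P Q B C" "finite Q" "q \<in> Q"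
    and "\<forall>p\<in>P. (\<Sum>q\<in>Q. \<eta> q * C q p) = 0"
  shows "\<eta> q = 0"
  using solve_by_left_inverse[where P=Q and L=P and c="\<lambda>p q. C q p" and M=B and t=\<eta> and r="\<lambda>_. 0"] assms
  by (simp add: inverse_matrices_def mult.commute)

lemma inverse_matrices_solve:
  assumes "inverse_matrices P Q B C" "finite Q" "q \<in> Q"
    and "\<forall>p\<in>P. t p = (\<Sum>q\<in>Q. B p q * s q) + e p"
  shows "s q = (\<Sum>p\<in>P. C q p * (t p - e p))"
  using solve_by_left_inverse[where P=Q and L=P and c=B and M="\<lambda>p q. C q p" and t=s and r="\<lambda>p. t p - e p"] assms
  by (simp add: inverse_matrices_def mult.commute)

lemma inverse_matrices_of_left_kernel_nat:
  fixes B :: "nat \<Rightarrow> nat \<Rightarrow> real"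
  assumes kernel: "\<And>\<eta>. \<forall>s<n. (\<Sum>r<n. \<eta> r * B r s) = 0 \<Longrightarrow> \<forall>r<n. \<eta> r = 0"
  shows "\<exists>C. inverse_matrices {..<n} {..<n} B C"
proof -
  define Bm where "Bm = mat n n (\<lambda>(r, s). B r s)"
  have Bm: "Bm \<in> carrier_mat n n" unfolding Bm_def by simp
  have "det (transpose_mat Bm) \<noteq> 0"
  proof
    assume "det (transpose_mat Bm) = 0"
    then obtain v where v: "v \<in> carrier_vec n" "v \<noteq> 0\<^sub>v n" "transpose_mat Bm *\<^sub>v v = 0\<^sub>v n"
      using det_0_iff_vec_prod_zero_field[of "transpose_mat Bm" n] Bm by auto
    have "\<forall>s<n. (\<Sum>r<n. vec_index v r * B r s) = 0"
    proof (intro allI impI)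
      fix s assume "s < n"
      then have "(\<Sum>r<n. vec_index v r * B r s) = vec_index (transpose_mat Bm *\<^sub>v v) s"
        using v(1) by (auto simp: Bm_def mult_mat_vec_def scalar_prod_def mult.commute
            atLeast0LessThan intro!: sum.cong)
      with \<open>s < n\<close> v(3) show "(\<Sum>r<n. vec_index v r * B r s) = 0" by simp
    qed
    then have "v = 0\<^sub>v n" using kernel v(1) by (intro eq_vecI) auto
    with v(2) show False ..
  qed
  then have "det Bm \<noteq> 0" using Bm by (simp add: det_transpose)
  then have "Bm \<in> Units (ring_mat TYPE(real) n undefined)"
    by (rule det_non_zero_imp_unit[OF Bm])
  then obtain Cm where Cm: "Cm \<in> carrier_mat n n" "Cm * Bm = 1\<^sub>m n" "Bm * Cm = 1\<^sub>m n"
    unfolding Units_def ring_mat_def by (auto simp del: mult_mat_vec_carrier)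
  have entry: "(X * Y) $$ (r, s) = (\<Sum>t<n. X $$ (r, t) * Y $$ (t, s))"
    if "X \<in> carrier_mat n n" "Y \<in> carrier_mat n n" "r < n" "s < n" for X Y :: "real mat" and r s
    using that by (simp add: times_mat_def scalar_prod_def atLeast0LessThan)
  show ?thesis
    unfolding inverse_matrices_def
    using entry[OF Bm Cm(1)] entry[OF Cm(1) Bm] Cm(2,3)
    by (intro exI[of _ "\<lambda>s r. Cm $$ (s, r)"]) (simp add: Bm_def)
qed

lemma inverse_matrices_reindex:
  assumes eP: "bij_betw eP {..<n} P" and eQ: "bij_betw eQ {..<n} Q"
    and C: "inverse_matrices {..<n} {..<n} (\<lambda>r s. B (eP r) (eQ s)) C"
  shows "inverse_matrices P Q B (\<lambda>q p. C (inv_into {..<n} eQ q) (inv_into {..<n} eP p))"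
proof -
  define iP where "iP = inv_into {..<n} eP"
  define iQ where "iQ = inv_into {..<n} eQ"
  have iP: "eP (iP p) = p" "iP p < n" if "p \<in> P" for p
    using that bij_betw_inv_into_right[OF eP] bij_betw_apply[OF bij_betw_inv_into[OF eP]]
    by (auto simp: iP_def)
  have iQ: "eQ (iQ q) = q" "iQ q < n" if "q \<in> Q" for q
    using that bij_betw_inv_into_right[OF eQ] bij_betw_apply[OF bij_betw_inv_into[OF eQ]]
    by (auto simp: iQ_def)
  have iP_eP: "iP (eP r) = r" and iQ_eQ: "iQ (eQ r) = r" if "r < n" for r
    using that bij_betw_inv_into_left[OF eP] bij_betw_inv_into_left[OF eQ] by (auto simp: iP_def iQ_def)
  have "inverse_matrices P Q B (\<lambda>q p. C (iQ q) (iP p))"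
    unfolding inverse_matrices_def
  proof (intro conjI ballI)
    fix p p' assume p: "p \<in> P" and p': "p' \<in> P"
    have "(\<Sum>q\<in>Q. B p q * C (iQ q) (iP p')) = (\<Sum>r<n. B (eP (iP p)) (eQ r) * C r (iP p'))"
      using p by (subst sum.reindex_bij_betw[OF eQ, symmetric]) (simp add: iQ_eQ iP)
    also have "\<dots> = (if iP p = iP p' then 1 else 0)"
      using C iP(2)[OF p] iP(2)[OF p'] by (simp add: inverse_matrices_def)
    also have "\<dots> = (if p = p' then 1 else 0)"
      using iP(1)[OF p] iP(1)[OF p'] by metis
    finally show "(\<Sum>q\<in>Q. B p q * C (iQ q) (iP p')) = (if p = p' then 1 else 0)" .
  next
    fix q q' assume q: "q \<in> Q" and q': "q' \<in> Q"
    have "(\<Sum>p\<in>P. C (iQ q) (iP p) * B p q') = (\<Sum>r<n. C (iQ q) r * B (eP r) (eQ (iQ q')))"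
      using q' by (subst sum.reindex_bij_betw[OF eP, symmetric]) (simp add: iP_eP iQ)
    also have "\<dots> = (if iQ q = iQ q' then 1 else 0)"
      using C iQ(2)[OF q] iQ(2)[OF q'] by (simp add: inverse_matrices_def)
    also have "\<dots> = (if q = q' then 1 else 0)"
      using iQ(1)[OF q] iQ(1)[OF q'] by metis
    finally show "(\<Sum>p\<in>P. C (iQ q) (iP p) * B p q') = (if q = q' then 1 else 0)" .
  qed
  then show ?thesis
    by (simp add: iP_def iQ_def)
qed

lemma inverse_matrices_of_left_kernel:
  fixes B :: "'p \<Rightarrow> 'q \<Rightarrow> real"
  assumes "finite P" "finite Q" "card P = card Q"
    and kernel: "\<And>\<eta>. \<forall>q\<in>Q. (\<Sum>p\<in>P. \<eta> p * B p q) = 0 \<Longrightarrow> \<forall>p\<in>P. \<eta> p = 0"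
  shows "\<exists>C. inverse_matrices P Q B C"
proof -
  define n where "n = card P"
  obtain eP where eP: "bij_betw eP {..<n} P"
    using ex_bij_betw_nat_finite[OF assms(1)] by (auto simp: n_def atLeast0LessThan)
  obtain eQ where eQ: "bij_betw eQ {..<n} Q"
    using ex_bij_betw_nat_finite[OF assms(2)] assms(3) by (auto simp: n_def atLeast0LessThan)
  have "\<forall>r<n. \<eta> r = 0" if "\<forall>s<n. (\<Sum>r<n. \<eta> r * B (eP r) (eQ s)) = 0" for \<eta>
  proof -
    define iP where "iP = inv_into {..<n} eP"
    have iP_eP: "iP (eP r) = r" if "r < n" for r
      using that bij_betw_inv_into_left[OF eP] by (simp add: iP_def)
    have "\<forall>q\<in>Q. (\<Sum>p\<in>P. \<eta> (iP p) * B p q) = 0"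
    proof
      fix q assume "q \<in> Q"
      then obtain s where "s < n" "q = eQ s"
        using eQ unfolding bij_betw_def by auto
      then show "(\<Sum>p\<in>P. \<eta> (iP p) * B p q) = 0"
        using that sum.reindex_bij_betw[OF eP, of "\<lambda>p. \<eta> (iP p) * B p q"] by (simp add: iP_eP)
    qed
    then have "\<forall>p\<in>P. \<eta> (iP p) = 0"
      by (rule kernel)
    then show ?thesis
      using bij_betw_apply[OF eP] iP_eP by fastforce
  qed
  from inverse_matrices_of_left_kernel_nat[OF this]
  obtain C where "inverse_matrices {..<n} {..<n} (\<lambda>r s. B (eP r) (eQ s)) C" ..
  then show ?thesis
    using inverse_matrices_reindex[OF eP eQ] by blast
qed

section \<open>The strong exponential condition\<close>

lemma strong_exp_cond_Icc:
  assumes "strong_exp_cond n F" "a < b" "\<forall>t\<in>{a..b}. (\<Sum>l<n. F t l * \<beta> l) = c"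
  shows "\<forall>l<n. \<beta> l = 0"
proof -
  have "\<not> negligible {a..b}"
    using assms(2) negligible_interval(1)[of a b] by (simp add: cbox_interval box_real)
  then have "emeasure lebesgue {a..b} \<noteq> 0"
    by (simp add: negligible_iff_emeasure0)
  moreover have "{a..b} \<in> sets lebesgue"
    by simp
  ultimately show ?thesis
    using assms(1,3) unfolding strong_exp_cond_def by blast
qed

lemma strong_exp_cond_derivative_combination:
  assumes "strong_exp_cond n F"
    and derivative: "\<forall>l<n. \<forall>t. ((\<lambda>v. F v l) has_real_derivative F' l t) (at t)"
    and "\<forall>t. (\<Sum>l<n. F' l t * \<beta> l) = 0"
  shows "\<forall>l<n. \<beta> l = 0"
proof -
  define G where "G t = (\<Sum>l<n. F t l * \<beta> l)" for t
  have "(G has_real_derivative (\<Sum>l<n. F' l t * \<beta> l)) (at t)" for t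
    unfolding G_def using derivative by (auto intro!: DERIV_sum DERIV_cmult_right)
  then have "(G has_real_derivative 0) (at t)" for t
    using assms(3) by simp
  then have "\<forall>t. G t = G 0"
    using DERIV_isconst_all by blast
  then show ?thesis
    using strong_exp_cond_Icc[OF assms(1), of 0 1 \<beta> "G 0"] unfolding G_def by simp
qed

lemma strong_exp_cond_stacked_constant:
  fixes T :: "'d::finite \<Rightarrow> real \<Rightarrow> nat \<Rightarrow> real"
  assumes strong: "\<forall>i. strong_exp_cond (k i) (T i)"
    and combination_const: "\<forall>z. (\<Sum>p\<in>block_indices k. \<eta> p * stacked T z p) = E"
  shows "\<forall>p\<in>block_indices k. \<eta> p = 0"
proof (clarify)
  fix i j assume "(i, j) \<in> block_indices k"
  then have "j < k i" by simp
  define R where "R = (\<Sum>c\<in>UNIV-{i}. \<Sum>l<k c. \<eta> (c, l) * T c 0 l)"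
  have "\<forall>t\<in>{0..1}. (\<Sum>l<k i. T i t l * \<eta> (i, l)) = E - R"
  proof
    fix t :: real
    define z :: "real^'d" where "z = (\<chi> c. if c = i then t else 0)"
    have "E = (\<Sum>l<k i. \<eta> (i, l) * T i (z $ i) l) + (\<Sum>c\<in>UNIV-{i}. \<Sum>l<k c. \<eta> (c, l) * T c (z $ c) l)"
      using combination_const[rule_format, of z] by (simp add: sum_block_indices sum.remove[of UNIV i])
    also have "(\<Sum>c\<in>UNIV-{i}. \<Sum>l<k c. \<eta> (c, l) * T c (z $ c) l) = R"
      unfolding R_def z_def by (intro sum.cong) auto
    finally show "(\<Sum>l<k i. T i t l * \<eta> (i, l)) = E - R"
      unfolding z_def by (simp add: mult.commute)
  qed
  then have "\<forall>l<k i. \<eta> (i, l) = 0"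
    using strong strong_exp_cond_Icc[of "k i" "T i" 0 1 "\<lambda>l. \<eta> (i, l)" "E - R"] by simp
  with \<open>j < k i\<close> show "\<eta> (i, j) = 0" by simp
qed

lemma strong_exp_cond_affine_left_kernel:
  fixes T :: "'d::finite \<Rightarrow> real \<Rightarrow> nat \<Rightarrow> real"
  assumes strong: "\<forall>i. strong_exp_cond (k i) (T i)"
    and affine: "\<forall>p\<in>block_indices k. \<forall>z. stacked T z p = (\<Sum>q\<in>Q. B p q * s z q) + e p"
    and kernel: "\<forall>q\<in>Q. (\<Sum>p\<in>block_indices k. \<eta> p * B p q) = 0"
  shows "\<forall>p\<in>block_indices k. \<eta> p = 0"
proof (rule strong_exp_cond_stacked_constant[OF strong], intro allI)
  fix z
  have "(\<Sum>p\<in>block_indices k. \<eta> p * stacked T z p)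
      = (\<Sum>p\<in>block_indices k. \<eta> p * ((\<Sum>q\<in>Q. B p q * s z q) + e p))"
    using affine by (intro sum.cong) auto
  also have "\<dots> = (\<Sum>q\<in>Q. (\<Sum>p\<in>block_indices k. \<eta> p * B p q) * s z q) + (\<Sum>p\<in>block_indices k. \<eta> p * e p)"
    by (simp add: distrib_left sum.distrib sum_distrib_left sum_distrib_right mult.assoc sum.swap[of _ Q])
  also have "\<dots> = (\<Sum>p\<in>block_indices k. \<eta> p * e p)"
    using kernel by simp
  finally show "(\<Sum>p\<in>block_indices k. \<eta> p * stacked T z p) = (\<Sum>p\<in>block_indices k. \<eta> p * e p)" .
qed

section \<open>Densities transported by a homeomorphism\<close>

lemma AE_lborel_continuous_eq:
  fixes f g :: "'a::euclidean_space \<Rightarrow> real"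
  assumes "continuous_on UNIV f" "continuous_on UNIV g" "AE x in lborel. f x = g x"
  shows "f x = g x"
proof (rule ccontr)
  assume "f x \<noteq> g x"
  define U where "U = {x. f x \<noteq> g x}"
  have "open U"
    unfolding U_def using assms(1,2) by (rule open_Collect_neq)
  then have "U \<in> null_sets lborel"
    using assms(3) AE_iff_null[of lborel "\<lambda>x. f x = g x"] by (simp add: U_def)
  then have "negligible U"
    by (simp add: negligible_iff_null_sets null_sets_completionI)
  moreover have "U \<noteq> {}"
    using \<open>f x \<noteq> g x\<close> by (auto simp: U_def)
  ultimately show False
    using open_not_negligible \<open>open U\<close> by blast
qed

lemma pushforward_density_reweight:
  fixes h :: "'a::euclidean_space \<Rightarrow> 'a"
  assumes "bij h" "continuous_on UNIV h" "continuous_on UNIV (inv h)"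
    and "q \<in> borel_measurable borel" "\<forall>z. q z \<ge> 0"
    and "continuous_on UNIV r" "\<forall>z. r z \<ge> 0" and q': "\<forall>z. q' z = q z * r z"
    and "continuous_on UNIV p" "\<forall>x. p x \<ge> 0" and "continuous_on UNIV p'" "\<forall>x. p' x \<ge> 0"
    and push: "distr (density lborel (\<lambda>z. ennreal (q z))) lborel h = density lborel (\<lambda>x. ennreal (p x))"
    and push': "distr (density lborel (\<lambda>z. ennreal (q' z))) lborel h = density lborel (\<lambda>x. ennreal (p' x))"
  shows "p' x = p x * r (inv h x)"
proof -
  have continuous_measurable: "(\<lambda>x. ennreal (F x)) \<in> borel_measurable lborel"
    if "continuous_on UNIV F" for F :: "'a \<Rightarrow> real"
    using borel_measurable_continuous_onI[OF that] by measurable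
  have r_inv_h: "continuous_on UNIV (\<lambda>x. r (inv h x))"
    using continuous_on_compose[OF assms(3), of r] assms(6)
    by (simp add: comp_def continuous_on_subset)
  define \<rho> where "\<rho> x = ennreal (r (inv h x))" for x
  have \<rho>: "\<rho> \<in> borel_measurable lborel"
    unfolding \<rho>_def by (rule continuous_measurable[OF r_inv_h])
  have q: "(\<lambda>z. ennreal (q z)) \<in> borel_measurable lborel"
    using assms(4) by simp
  have h: "h \<in> density lborel (\<lambda>z. ennreal (q z)) \<rightarrow>\<^sub>M lborel"
    using borel_measurable_continuous_onI[OF assms(2)] by simp
  have "density lborel (\<lambda>z. ennreal (q' z)) = density (density lborel (\<lambda>z. ennreal (q z))) (\<lambda>z. \<rho> (h z))"
    using assms(1,5,7) continuous_measurable[OF assms(6)]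
    by (subst density_density_eq[OF q]) (simp_all add: q' \<rho>_def bij_is_inj ennreal_mult)
  then have "density lborel (\<lambda>x. ennreal (p' x)) = density (distr (density lborel (\<lambda>z. ennreal (q z))) lborel h) \<rho>"
    using push' density_distr[OF _ h, of \<rho>] \<rho> by simp
  also have "\<dots> = density lborel (\<lambda>x. ennreal (p x) * \<rho> x)"
    using push density_density_eq[OF continuous_measurable[OF assms(9)] \<rho>] by simp
  finally have "AE x in lborel. ennreal (p' x) = ennreal (p x) * \<rho> x"
    using \<rho> continuous_measurable[OF assms(9)] continuous_measurable[OF assms(11)]
    by (intro sigma_finite_measure.density_unique[OF sigma_finite_lborel]) auto
  then have "AE x in lborel. p' x = p x * r (inv h x)"
    by eventually_elim (simp add: \<rho>_def assms(7,10,12) ennreal_mult[symmetric])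
  moreover have "continuous_on UNIV (\<lambda>x. p x * r (inv h x))"
    by (intro continuous_intros assms(9) r_inv_h)
  ultimately show ?thesis
    using AE_lborel_continuous_eq[OF assms(11)] by blast
qed

lemma pushforward_density_normaliser_pos:
  fixes h :: "'a::euclidean_space \<Rightarrow> 'a"
  assumes "h \<in> borel_measurable borel"
    and "integrable lborel F" "integral\<^sup>L lborel F > 0" "\<forall>z. F z \<ge> 0" "c > 0" "\<forall>x. p x > 0"
    and q: "\<forall>z. q z = F z * c"
    and push: "distr (density lborel (\<lambda>z. ennreal (q z))) lborel h = density lborel (\<lambda>x. ennreal (p x / Z))"
  shows "Z > 0"
proof (rule ccontr)
  assume "\<not> Z > 0"
  then have "\<forall>x. ennreal (p x / Z) = 0"
    using assms(6) by (simp add: divide_nonneg_nonpos less_imp_le ennreal_eq_0_iff)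
  then have null: "emeasure (density lborel (\<lambda>x. ennreal (p x / Z))) UNIV = 0"
    by (simp add: emeasure_density)
  have F: "F \<in> borel_measurable lborel"
    using assms(2) by (rule borel_measurable_integrable)
  have "emeasure (distr (density lborel (\<lambda>z. ennreal (q z))) lborel h) UNIV
      = (\<integral>\<^sup>+z. ennreal c * ennreal (F z) \<partial>lborel)"
    using assms(1,4,5) F
    by (simp add: q emeasure_distr emeasure_density ennreal_mult mult.commute)
  also have "\<dots> = ennreal c * ennreal (integral\<^sup>L lborel F)"
    using assms(2,4) F by (simp add: nn_integral_cmult nn_integral_eq_integral)
  also have "\<dots> > 0"
    using assms(3,5) by (simp add: ennreal_mult[symmetric])
  finally show False
    using push null by simp
qed

section \<open>Regularity and derivatives along coordinate lines\<close>

lemma differentiable_imp_continuous_on_UNIV: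
  "(\<And>x. F differentiable (at x)) \<Longrightarrow> continuous_on UNIV F"
  by (simp add: differentiable_imp_continuous_within continuous_at_imp_continuous_on)

lemma C1_map_imp_differentiable: "C1_map F \<Longrightarrow> F differentiable (at x)"
  unfolding C1_map_def differentiable_def by blast

lemma continuous_on_blk_ip_comp:
  fixes \<phi> :: "'a::topological_space \<Rightarrow> real^'d::finite"
  assumes "\<forall>i. \<forall>j<n i. continuous_on UNIV (\<lambda>v. F i v j)" "continuous_on UNIV \<phi>"
  shows "continuous_on UNIV (\<lambda>z. blk_ip n (\<lambda>i. F i (\<phi> z $ i)) v)"
proof -
  have "continuous_on UNIV (\<lambda>z. F i (\<phi> z $ i) j)" if "j < n i" for i j
  proof -
    have "continuous_on UNIV (\<lambda>z. \<phi> z $ i)"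
      using assms(2) by (intro continuous_intros)
    then show ?thesis
      using continuous_on_compose2[OF assms(1)[rule_format, OF that]] by simp
  qed
  then show ?thesis
    unfolding blk_ip_def by (intro continuous_on_sum continuous_on_mult continuous_on_const) auto
qed

lemma local_extremum_derivative_zero:
  assumes "is_local_extremum \<phi> u" "(\<phi> has_real_derivative D) (at u)"
  shows "D = 0"
  using assms DERIV_local_max[OF assms(2)] DERIV_local_min[OF assms(2)]
  unfolding is_local_extremum_def by (metis abs_minus_commute)

lemma axis_line_component_derivative:
  fixes z :: "real^'d::finite"
  assumes "(F has_real_derivative F') (at (z $ a))"
  shows "((\<lambda>t. F ((z + t *\<^sub>R axis a 1) $ c)) has_real_derivative (if c = a then F' else 0)) (at 0)"
proof (cases "c = a")
  case True
  have "(F has_real_derivative F') (at (z $ a + 0))"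
    using assms by simp
  moreover have "((\<lambda>t. z $ a + t) has_real_derivative 1) (at 0)"
    by (auto intro!: derivative_eq_intros)
  ultimately have "((\<lambda>t. F (z $ a + t)) has_real_derivative F' * 1) (at 0)"
    by (rule DERIV_chain2)
  with True show ?thesis by (simp add: axis_def)
qed (simp add: axis_def)

lemma stacked_affine_partial_derivative:
  fixes w :: "real^'d::finite \<Rightarrow> real" and C :: "'d \<times> nat \<Rightarrow> real"
  assumes affine: "\<forall>z. G (w z) = (\<Sum>p\<in>block_indices k. C p * stacked T z p) + b"
    and G: "(G has_real_derivative G') (at (w z))"
    and T: "\<forall>l<k a. ((\<lambda>v. T a v l) has_real_derivative T' l) (at (z $ a))"
    and w: "((\<lambda>t. w (z + t *\<^sub>R axis a 1)) has_real_derivative Dw) (at 0)"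
  shows "G' * Dw = (\<Sum>l<k a. C (a, l) * T' l)"
proof -
  define line where "line t = z + t *\<^sub>R axis a 1" for t :: real
  have "((\<lambda>t. G (w (line t))) has_real_derivative G' * Dw) (at 0)"
    using DERIV_chain2[where f=G and g="\<lambda>t. w (line t)" and x=0] G w by (simp add: line_def)
  moreover have "((\<lambda>t. stacked T (line t) p) has_real_derivative (if fst p = a then T' (snd p) else 0)) (at 0)"
    if "p \<in> block_indices k" for p
  proof (cases p)
    case (Pair c l)
    show ?thesis
    proof (cases "c = a")
      case True
      with that T Pair show ?thesis
        using axis_line_component_derivative[of "\<lambda>v. T a v l" "T' l" z a a] by (simp add: line_def)
    qed (simp add: Pair line_def axis_def)
  qed
  then have "((\<lambda>t. G (w (line t))) has_real_derivative
      (\<Sum>p\<in>block_indices k. C p * (if fst p = a then T' (snd p) else 0))) (at 0)"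
    using affine by (auto intro!: DERIV_add[where E=0, simplified] DERIV_sum DERIV_cmult)
  ultimately have "G' * Dw = (\<Sum>p\<in>block_indices k. C p * (if fst p = a then T' (snd p) else 0))"
    by (rule DERIV_unique)
  also have "\<dots> = (\<Sum>l<k a. C (a, l) * T' l)"
    by (subst sum_block_indices_single_block[of a]) auto
  finally show ?thesis .
qed

section \<open>Vector-valued statistics\<close>

lemma rank_one_profile_proportional:
  fixes \<Lambda> :: "'d::finite \<Rightarrow> real \<Rightarrow> nat \<Rightarrow> real"
  assumes rank_one: "\<forall>z a. \<forall>j<n. \<Psi> z j * D z a = \<Lambda> a (z $ a) j"
    and "c \<noteq> a" "j\<^sub>0 < n" "\<Lambda> a t\<^sub>0 j\<^sub>0 \<noteq> 0"
  shows "\<exists>s. \<forall>j<n. \<Lambda> c t j = s * \<Lambda> a t\<^sub>0 j"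
proof -
  define z :: "real^'d" where "z = (\<chi> x. if x = a then t\<^sub>0 else if x = c then t else 0)"
  have z: "z $ a = t\<^sub>0" "z $ c = t"
    using assms(2) by (auto simp: z_def)
  have "D z a \<noteq> 0"
    using rank_one assms(3,4) z by (metis mult_zero_right)
  have "\<Lambda> c t j = D z c / D z a * \<Lambda> a t\<^sub>0 j" if "j < n" for j
    using rank_one that z \<open>D z a \<noteq> 0\<close> by (metis nonzero_mult_div_cancel_right times_divide_eq_left mult.commute)
  then show ?thesis by blast
qed

lemma exists_orthogonal_nonzero:
  fixes \<mu> :: "nat \<Rightarrow> real"
  assumes "2 \<le> n" "j\<^sub>0 < n" "\<mu> j\<^sub>0 \<noteq> 0"
  obtains \<eta> j\<^sub>1 where "j\<^sub>1 < n" "\<eta> j\<^sub>1 \<noteq> 0" "(\<Sum>j<n. \<eta> j * \<mu> j) = 0"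
proof -
  define j\<^sub>1 where "j\<^sub>1 = (if j\<^sub>0 = 0 then 1 else (0::nat))"
  have j\<^sub>1: "j\<^sub>1 < n" "j\<^sub>1 \<noteq> j\<^sub>0"
    using assms(1,2) by (auto simp: j\<^sub>1_def)
  define \<eta> where "\<eta> j = (if j = j\<^sub>0 then \<mu> j\<^sub>1 else if j = j\<^sub>1 then - \<mu> j\<^sub>0 else 0)" for j
  have "(\<Sum>j<n. \<eta> j * \<mu> j) = (\<Sum>j<n. (if j = j\<^sub>0 then \<mu> j\<^sub>1 * \<mu> j\<^sub>0 else 0) + (if j = j\<^sub>1 then - \<mu> j\<^sub>0 * \<mu> j\<^sub>1 else 0))"
    using j\<^sub>1 by (intro sum.cong) (auto simp: \<eta>_def)
  also have "\<dots> = 0"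
    using assms(2) j\<^sub>1 by (simp add: sum.distrib)
  finally show thesis
    using that[of j\<^sub>1 \<eta>] j\<^sub>1 assms(3) by (simp add: \<eta>_def)
qed

lemma single_block_of_rank_one_derivatives:
  fixes C :: "nat \<Rightarrow> 'd::finite \<times> nat \<Rightarrow> real"
  assumes "2 \<le> n"
    and strong: "\<forall>a. strong_exp_cond (k a) (T a)"
    and T': "\<forall>a. \<forall>l<k a. \<forall>t. ((\<lambda>v. T a v l) has_real_derivative T' a l t) (at t)"
    and rank_one: "\<forall>z a. \<forall>j<n. \<Psi> z j * D z a = (\<Sum>l<k a. C j (a, l) * T' a l (z $ a))"
    and kernel: "\<forall>\<eta>. (\<forall>p\<in>block_indices k. (\<Sum>j<n. \<eta> j * C j p) = 0) \<longrightarrow> (\<forall>j<n. \<eta> j = 0)"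
  shows "\<exists>c. \<forall>a. a \<noteq> c \<longrightarrow> (\<forall>j<n. \<forall>l<k a. C j (a, l) = 0)"
proof (rule ccontr)
  define \<Lambda> where "\<Lambda> a t j = (\<Sum>l<k a. C j (a, l) * T' a l t)" for a t j
  have nonzero_profile: "\<exists>t j. j < n \<and> \<Lambda> a t j \<noteq> 0" if "\<exists>j<n. \<exists>l<k a. C j (a, l) \<noteq> 0" for a
  proof (rule ccontr)
    assume "\<not> (\<exists>t j. j < n \<and> \<Lambda> a t j \<noteq> 0)"
    then have "\<forall>l<k a. C j (a, l) = 0" if "j < n" for j
      using strong_exp_cond_derivative_combination[of "k a" "T a" "T' a" "\<lambda>l. C j (a, l)"] strong T' that
      by (auto simp: \<Lambda>_def mult.commute)
    with that show False by blast
  qed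
  assume "\<not> (\<exists>c. \<forall>a. a \<noteq> c \<longrightarrow> (\<forall>j<n. \<forall>l<k a. C j (a, l) = 0))"
  then obtain a b where "b \<noteq> a" and "\<exists>j<n. \<exists>l<k a. C j (a, l) \<noteq> 0" "\<exists>j<n. \<exists>l<k b. C j (b, l) \<noteq> 0"
    by metis
  then obtain t\<^sub>a j\<^sub>a t\<^sub>b j\<^sub>b where a: "j\<^sub>a < n" "\<Lambda> a t\<^sub>a j\<^sub>a \<noteq> 0" and b: "j\<^sub>b < n" "\<Lambda> b t\<^sub>b j\<^sub>b \<noteq> 0"
    using nonzero_profile by meson
  have rank_one': "\<forall>z a. \<forall>j<n. \<Psi> z j * D z a = \<Lambda> a (z $ a) j"
    using rank_one by (simp add: \<Lambda>_def)
  \<comment> \<open>All profiles are proportional to a single vector, the one at \<open>(a, t\<^sub>a)\<close>; for block \<open>a\<close> itself this goes through block \<open>b\<close>.\<close>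
  have parallel: "\<exists>s. \<forall>j<n. \<Lambda> c t j = s * \<Lambda> a t\<^sub>a j" for c t
  proof (cases "c = a")
    case True
    obtain s\<^sub>1 where "\<forall>j<n. \<Lambda> a t j = s\<^sub>1 * \<Lambda> b t\<^sub>b j"
      using rank_one_profile_proportional[OF rank_one' \<open>b \<noteq> a\<close>[symmetric] b] by blast
    moreover obtain s\<^sub>2 where "\<forall>j<n. \<Lambda> b t\<^sub>b j = s\<^sub>2 * \<Lambda> a t\<^sub>a j"
      using rank_one_profile_proportional[OF rank_one' \<open>b \<noteq> a\<close> a] by blast
    ultimately show ?thesis
      using True by (metis mult.assoc)
  qed (use rank_one_profile_proportional[OF rank_one' _ a] in blast)
  obtain \<eta> j\<^sub>1 where \<eta>: "j\<^sub>1 < n" "\<eta> j\<^sub>1 \<noteq> 0" "(\<Sum>j<n. \<eta> j * \<Lambda> a t\<^sub>a j) = 0"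
    using exists_orthogonal_nonzero[where \<mu>="\<Lambda> a t\<^sub>a", OF assms(1) a] by blast
  have "\<forall>l<k c. (\<Sum>j<n. \<eta> j * C j (c, l)) = 0" for c
  proof (rule strong_exp_cond_derivative_combination[of "k c" "T c" "T' c"])
    show "\<forall>t. (\<Sum>l<k c. T' c l t * (\<Sum>j<n. \<eta> j * C j (c, l))) = 0"
    proof
      fix t
      obtain s where s: "\<forall>j<n. \<Lambda> c t j = s * \<Lambda> a t\<^sub>a j"
        using parallel by blast
      have "(\<Sum>l<k c. T' c l t * (\<Sum>j<n. \<eta> j * C j (c, l))) = (\<Sum>j<n. \<eta> j * \<Lambda> c t j)"
        unfolding \<Lambda>_def by (simp add: sum_distrib_left sum_distrib_right mult_ac) (rule sum.swap)
      also have "\<dots> = s * (\<Sum>j<n. \<eta> j * \<Lambda> a t\<^sub>a j)"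
        using s by (simp add: sum_distrib_left mult_ac)
      finally show "(\<Sum>l<k c. T' c l t * (\<Sum>j<n. \<eta> j * C j (c, l))) = 0"
        using \<eta>(3) by simp
    qed
  qed (use strong T' in auto)
  then have "\<forall>j<n. \<eta> j = 0"
    using kernel by (auto simp: block_indices_def)
  with \<eta>(1,2) show False by blast
qed

section \<open>Scalar statistics\<close>

lemma inner_axis_one: "axis i (1::real) \<bullet> x = x $ i"
  by (simp add: inner_axis')

lemma strong_exp_cond_critical_values_constant:
  fixes \<phi> :: "'a::topological_space \<Rightarrow> real"
  assumes strong: "strong_exp_cond 1 F"
    and F': "\<forall>t. ((\<lambda>v. F v 0) has_real_derivative F' t) (at t)"
    and "continuous_on S \<phi>" "connected S" and critical: "\<forall>x\<in>S. F' (\<phi> x) = 0"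
    and "x \<in> S" "y \<in> S"
  shows "\<phi> x = \<phi> y"
proof (rule ccontr)
  assume "\<phi> x \<noteq> \<phi> y"
  define lo where "lo = min (\<phi> x) (\<phi> y)"
  define hi where "hi = max (\<phi> x) (\<phi> y)"
  have "lo < hi"
    using \<open>\<phi> x \<noteq> \<phi> y\<close> by (auto simp: lo_def hi_def)
  have "connected (\<phi> ` S)"
    using assms(3,4) by (rule connected_continuous_image)
  moreover have "lo \<in> \<phi> ` S" "hi \<in> \<phi> ` S"
    using assms(6,7) by (auto simp: lo_def hi_def min_def max_def)
  ultimately have interval: "{lo..hi} \<subseteq> \<phi> ` S"
    by (rule connected_contains_Icc)
  have "continuous_on {lo..hi} (\<lambda>v. F v 0)"
    using F' by (intro continuous_at_imp_continuous_on ballI DERIV_isCont) blast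
  moreover have "((\<lambda>v. F v 0) has_real_derivative 0) (at t)" if "lo < t" "t < hi" for t
  proof -
    have "t \<in> \<phi> ` S"
      using interval that by auto
    then obtain x where "x \<in> S" "t = \<phi> x"
      by blast
    then have "F' t = 0"
      using critical by simp
    with F' show ?thesis by metis
  qed
  ultimately have "\<exists>c. \<forall>t\<in>{lo..hi}. F t 0 = c"
    using \<open>lo < hi\<close> by (intro exI[of _ "F lo 0"] ballI DERIV_isconst2[of lo hi]) auto
  then obtain c where "\<forall>t\<in>{lo..hi}. (\<Sum>l<1. F t l * 1) = c"
    by auto
  then have "\<forall>l<(1::nat). (1::real) = 0"
    using strong_exp_cond_Icc[OF strong \<open>lo < hi\<close>, of "\<lambda>_. 1" c] by blast
  from this[rule_format, of 0] show False
    by simp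
qed

lemma hyperplane_no_injection_fixing_two_coordinates:
  fixes \<phi> :: "real^'d::finite \<Rightarrow> real^'d" and i :: 'd and u :: real
  defines "S \<equiv> {x. x $ i = u}"
  assumes "continuous_on S \<phi>" "inj_on \<phi> S" "a \<noteq> b" "x\<^sub>0 \<in> S"
    and fixed: "\<forall>x\<in>S. \<phi> x $ a = \<phi> x\<^sub>0 $ a \<and> \<phi> x $ b = \<phi> x\<^sub>0 $ b"
  shows False
proof -
  define V where "V = {x::real^'d. axis i 1 \<bullet> x = 0}"
  define V' where "V' = {x::real^'d. axis a 1 \<bullet> x = 0}"
  define W where "W = V' \<inter> {x::real^'d. axis b 1 \<bullet> x = 0}"
  have "subspace V" "subspace V'" "subspace W"
    unfolding V_def V'_def W_def by (auto intro: subspace_hyperplane subspace_inter)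
  have translate: "x + x\<^sub>0 \<in> S" if "x \<in> V" for x
    using that \<open>x\<^sub>0 \<in> S\<close> by (simp add: S_def V_def inner_axis_one)
  have "dim V \<le> dim W"
  proof (rule continuous_injective_image_subspace_dim_le[where f="\<lambda>x. \<phi> (x + x\<^sub>0) - \<phi> x\<^sub>0"])
    show "continuous_on V (\<lambda>x. \<phi> (x + x\<^sub>0) - \<phi> x\<^sub>0)"
      using translate by (intro continuous_intros continuous_on_compose2[OF assms(2)]) auto
    show "(\<lambda>x. \<phi> (x + x\<^sub>0) - \<phi> x\<^sub>0) \<in> V \<rightarrow> W"
      using translate fixed by (auto simp: W_def V'_def inner_axis_one)
    show "inj_on (\<lambda>x. \<phi> (x + x\<^sub>0) - \<phi> x\<^sub>0) V"
    proof (rule inj_onI)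
      fix x y assume "x \<in> V" "y \<in> V" "\<phi> (x + x\<^sub>0) - \<phi> x\<^sub>0 = \<phi> (y + x\<^sub>0) - \<phi> x\<^sub>0"
      then have "x + x\<^sub>0 = y + x\<^sub>0"
        using inj_onD[OF assms(3) _ translate translate] by simp
      then show "x = y" by simp
    qed
  qed fact+
  moreover have "dim W < dim V'"
  proof (rule dim_psubset)
    have "axis b (1::real) $ a = 0"
      using \<open>a \<noteq> b\<close> by (simp add: axis_def)
    then have "axis b 1 \<in> V'" "axis b 1 \<notin> W"
      by (simp_all add: V'_def W_def inner_axis_one)
    then have "W \<subset> V'"
      unfolding W_def by blast
    then show "span W \<subset> span V'"
      using \<open>subspace W\<close> \<open>subspace V'\<close> by (metis span_eq_iff)
  qed
  moreover have "dim V = dim V'"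
    by (simp add: V_def V'_def dim_hyperplane axis_eq_0_iff)
  ultimately show False by simp
qed

lemma single_block_of_critical_level_set:
  fixes c :: "'d::finite \<Rightarrow> real" and W V :: "real^'d \<Rightarrow> real^'d"
  assumes strong: "\<forall>a. strong_exp_cond 1 (T a)"
    and T': "\<forall>a t. ((\<lambda>v. T a v 0) has_real_derivative T' a t) (at t)"
    and critical: "\<forall>z a. W z $ i = u \<longrightarrow> c a * T' a (z $ a) = 0"
    and "\<forall>x. W (V x) = x" "continuous_on UNIV V" "inj V"
  shows "\<exists>c\<^sub>0. \<forall>a. a \<noteq> c\<^sub>0 \<longrightarrow> c a = 0"
proof (rule ccontr)
  define S where "S = {x::real^'d. x $ i = u}"
  define x\<^sub>0 :: "real^'d" where "x\<^sub>0 = (\<chi> j. u)"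
  have "x\<^sub>0 \<in> S"
    by (simp add: S_def x\<^sub>0_def)
  have "connected S"
  proof -
    have "S = {x. axis i 1 \<bullet> x = u}"
      by (simp add: S_def inner_axis_one)
    then show ?thesis
      by (simp add: convex_connected convex_hyperplane)
  qed
  have fixed: "\<forall>x\<in>S. V x $ a = V x\<^sub>0 $ a" if "c a \<noteq> 0" for a
  proof
    fix x assume "x \<in> S"
    show "V x $ a = V x\<^sub>0 $ a"
    proof (rule strong_exp_cond_critical_values_constant[where \<phi>="\<lambda>x. V x $ a" and S=S])
      show "continuous_on S (\<lambda>x. V x $ a)"
        using assms(5) by (auto intro!: continuous_intros intro: continuous_on_subset)
      show "\<forall>x\<in>S. T' a (V x $ a) = 0"
      proof
        fix x assume "x \<in> S"
        then have "W (V x) $ i = u"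
          using assms(4) by (simp add: S_def)
        then show "T' a (V x $ a) = 0"
          using critical that by auto
      qed
    qed (use strong T' \<open>connected S\<close> \<open>x \<in> S\<close> \<open>x\<^sub>0 \<in> S\<close> in auto)
  qed
  assume "\<not> (\<exists>c\<^sub>0. \<forall>a. a \<noteq> c\<^sub>0 \<longrightarrow> c a = 0)"
  then obtain a b where "a \<noteq> b" "c a \<noteq> 0" "c b \<noteq> 0"
    by metis
  show False
  proof (rule hyperplane_no_injection_fixing_two_coordinates[where \<phi>=V])
    show "continuous_on {x. x $ i = u} V" "inj_on V {x. x $ i = u}"
      using assms(5,6) by (auto intro: continuous_on_subset inj_on_subset)
  qed (use \<open>a \<noteq> b\<close> \<open>x\<^sub>0 \<in> S\<close> fixed \<open>c a \<noteq> 0\<close> \<open>c b \<noteq> 0\<close> in \<open>auto simp: S_def\<close>)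
qed

section \<open>Block structure of the mixing matrix\<close>

lemma inverse_matrices_dim_eq:
  fixes A B :: "nat \<Rightarrow> nat \<Rightarrow> real"
  assumes "inverse_matrices {..<n} {..<n'} A B"
  shows "n = n'"
proof -
  have "real n = (\<Sum>j<n. \<Sum>l<n'. A j l * B l j)"
    using assms by (simp add: inverse_matrices_def)
  also have "\<dots> = (\<Sum>l<n'. \<Sum>j<n. B l j * A j l)"
    by (subst sum.swap) (simp add: mult.commute)
  also have "\<dots> = real n'"
    using assms by (simp add: inverse_matrices_def)
  finally show ?thesis by simp
qed

lemma sq_invertible_of_inverse_matrices:
  assumes "inverse_matrices {..<n} {..<n} A B"
  shows "sq_invertible n A"
  using assms unfolding inverse_matrices_def sq_invertible_def by blast

lemma block_support_bij:
  fixes C :: "'d::finite \<times> nat \<Rightarrow> 'd \<times> nat \<Rightarrow> real"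
  assumes inverse: "inverse_matrices (block_indices k) (block_indices m) B C"
    and k_pos: "\<forall>a. 0 < k a"
    and support: "\<forall>i a. a \<noteq> \<gamma> i \<longrightarrow> (\<forall>j<m i. \<forall>l<k a. C (i, j) (a, l) = 0)"
  shows "bij \<gamma>"
proof -
  have "surj \<gamma>"
  proof (rule ccontr)
    assume "\<not> surj \<gamma>"
    then obtain a where a: "a \<notin> range \<gamma>" by auto
    have "(\<Sum>q\<in>block_indices m. B (a, 0) q * C q (a, 0)) = 1"
      using inverse k_pos by (simp add: inverse_matrices_def)
    moreover have "(\<Sum>q\<in>block_indices m. B (a, 0) q * C q (a, 0)) = 0"
    proof (intro sum.neutral ballI)
      fix q assume "q \<in> block_indices m"
      then obtain i j where "q = (i, j)" "j < m i"
        by (auto simp: block_indices_def)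
      moreover have "a \<noteq> \<gamma> i"
        using a by auto
      ultimately show "B (a, 0) q * C q (a, 0) = 0"
        using support k_pos by simp
    qed
    ultimately show False by simp
  qed
  then show ?thesis
    by (simp add: bij_def finite_UNIV_surj_inj)
qed

lemma block_support_diagonal_inverse:
  fixes B C :: "'d::finite \<times> nat \<Rightarrow> 'd \<times> nat \<Rightarrow> real"
  assumes inverse: "inverse_matrices (block_indices k) (block_indices m) B C" and "inj \<gamma>"
    and support: "\<forall>i a. a \<noteq> \<gamma> i \<longrightarrow> (\<forall>j<m i. \<forall>l<k a. C (i, j) (a, l) = 0)"
  shows "inverse_matrices {..<m i} {..<k (\<gamma> i)} (\<lambda>j l. C (i, j) (\<gamma> i, l)) (\<lambda>l j. B (\<gamma> i, l) (i, j))"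
  unfolding inverse_matrices_def
proof (intro conjI ballI)
  fix j j' assume "j \<in> {..<m i}" "j' \<in> {..<m i}"
  moreover have "(\<Sum>p\<in>block_indices k. C (i, j) p * B p (i, j')) = (\<Sum>l<k (\<gamma> i). C (i, j) (\<gamma> i, l) * B (\<gamma> i, l) (i, j'))"
    if "j < m i" using support that by (intro sum_block_indices_single_block) auto
  ultimately show "(\<Sum>l<k (\<gamma> i). C (i, j) (\<gamma> i, l) * B (\<gamma> i, l) (i, j')) = (if j = j' then 1 else 0)"
    using inverse by (simp add: inverse_matrices_def)
next
  fix l l' assume "l \<in> {..<k (\<gamma> i)}" "l' \<in> {..<k (\<gamma> i)}"
  moreover have "(\<Sum>q\<in>block_indices m. B (\<gamma> i, l) q * C q (\<gamma> i, l')) = (\<Sum>j<m i. B (\<gamma> i, l) (i, j) * C (i, j) (\<gamma> i, l'))"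
    if "l' < k (\<gamma> i)"
    using support that injD[OF \<open>inj \<gamma>\<close>] by (intro sum_block_indices_single_block) (metis mult_zero_right)
  ultimately show "(\<Sum>j<m i. B (\<gamma> i, l) (i, j) * C (i, j) (\<gamma> i, l')) = (if l = l' then 1 else 0)"
    using inverse by (simp add: inverse_matrices_def)
qed

section \<open>Identifiability in the IMCA model\<close>

locale imca_model =
  fixes h f :: "real^'d::finite \<Rightarrow> real^'d"
    and k m :: "'d \<Rightarrow> nat"
    and T :: "'d \<Rightarrow> real \<Rightarrow> nat \<Rightarrow> real"
    and lam :: "'d \<Rightarrow> 'y::euclidean_space \<Rightarrow> nat \<Rightarrow> real"
    and \<mu> :: "real^'d \<Rightarrow> real"
    and \<Gamma> :: "'y \<Rightarrow> real"
    and Y :: "'y set"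
    and ys :: "nat \<Rightarrow> 'y"
    and H :: "'d \<Rightarrow> real \<Rightarrow> nat \<Rightarrow> real"
    and g :: "'d \<Rightarrow> 'y \<Rightarrow> nat \<Rightarrow> real"
    and Z :: "'y \<Rightarrow> real"
  assumes mu_meas: "\<mu> \<in> borel_measurable lborel"
    and mu_nonneg: "\<forall>z. \<mu> z \<ge> 0"
    and normaliser: "\<forall>y\<in>Y.
        integrable lborel (\<lambda>z. \<mu> z * exp (blk_ip k (\<lambda>i. T i (z $ i)) (\<lambda>i. lam i y))) \<and>
        (LINT z|lborel. \<mu> z * exp (blk_ip k (\<lambda>i. T i (z $ i)) (\<lambda>i. lam i y))) > 0 \<and>
        \<Gamma> y = ln (LINT z|lborel. \<mu> z * exp (blk_ip k (\<lambda>i. T i (z $ i)) (\<lambda>i. lam i y)))"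
    and h_inv: "bij h"
    and T_diff: "\<forall>i. vec_differentiable (k i) (T i)"
    and T_strong: "\<forall>i. strong_exp_cond (k i) (T i)"
    and ys_in: "\<forall>l \<le> (\<Sum>i\<in>UNIV. k i). ys l \<in> Y"
    and L_inv: "blk_matrix_invertible k (\<lambda>l i j. lam i (ys l) j - lam i (ys 0) j)"
    and H_diff: "\<forall>l. vec_differentiable (m l) (H l)"
    and m_perm: "\<exists>\<sigma>. bij \<sigma> \<and> (\<forall>i. m i = k (\<sigma> i))"
    and model_x: "\<forall>y\<in>Y.
        distr (density lborel (\<lambda>z. ennreal (\<mu> z * exp (blk_ip k (\<lambda>i. T i (z $ i)) (\<lambda>i. lam i y) - \<Gamma> y))))
              lborel h
        = density lborel (\<lambda>x. ennreal (exp (- blk_ip m (\<lambda>i. H i (f x $ i)) (\<lambda>i. g i y)) / Z y))"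
    and h_differentiable: "\<And>x. h differentiable (at x)"
    and inv_h_differentiable: "\<And>x. inv h differentiable (at x)"
    and f_differentiable: "\<And>x. f differentiable (at x)"
    and k_pos: "\<And>i. 0 < k i"
begin

lemma T_has_derivative: "l < k i \<Longrightarrow> ((\<lambda>v. T i v l) has_real_derivative deriv (\<lambda>v. T i v l) t) (at t)"
  using T_diff by (simp add: vec_differentiable_def DERIV_deriv_iff_real_differentiable)

lemma H_has_derivative: "j < m i \<Longrightarrow> ((\<lambda>v. H i v j) has_real_derivative deriv (\<lambda>v. H i v j) t) (at t)"
  using H_diff by (simp add: vec_differentiable_def DERIV_deriv_iff_real_differentiable)

lemma Z_pos:
  assumes "y \<in> Y"
  shows "Z y > 0"
proof (rule pushforward_density_normaliser_pos[where F="\<lambda>z. \<mu> z * exp (blk_ip k (\<lambda>i. T i (z $ i)) (\<lambda>i. lam i y))"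
      and c="exp (- \<Gamma> y)" and p="\<lambda>x. exp (- blk_ip m (\<lambda>i. H i (f x $ i)) (\<lambda>i. g i y))"])
  show "h \<in> borel_measurable borel"
    using differentiable_imp_continuous_on_UNIV[OF h_differentiable] by (rule borel_measurable_continuous_onI)
  show "\<forall>z. \<mu> z * exp (blk_ip k (\<lambda>i. T i (z $ i)) (\<lambda>i. lam i y) - \<Gamma> y)
      = \<mu> z * exp (blk_ip k (\<lambda>i. T i (z $ i)) (\<lambda>i. lam i y)) * exp (- \<Gamma> y)"
    by (simp add: exp_diff exp_minus field_simps)
qed (use assms normaliser mu_nonneg model_x in auto)

lemma natural_parameter_difference:
  assumes "y\<^sub>0 \<in> Y" "y\<^sub>1 \<in> Y"
  shows "\<exists>\<kappa>. \<forall>z. blk_ip k (\<lambda>i. T i (z $ i)) (\<lambda>i j. lam i y\<^sub>1 j - lam i y\<^sub>0 j)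
            = - blk_ip m (\<lambda>i. H i (f (h z) $ i)) (\<lambda>i j. g i y\<^sub>1 j - g i y\<^sub>0 j) + \<kappa>"
proof -
  define a where "a z y = blk_ip k (\<lambda>i. T i (z $ i)) (\<lambda>i. lam i y)" for z y
  define b where "b x y = blk_ip m (\<lambda>i. H i (f x $ i)) (\<lambda>i. g i y)" for x y
  have a: "continuous_on UNIV (\<lambda>z. a z y)" for y
    unfolding a_def using T_diff
    by (intro continuous_on_blk_ip_comp continuous_on_id)
      (auto simp: vec_differentiable_def intro!: differentiable_imp_continuous_on_UNIV)
  have b: "continuous_on UNIV (\<lambda>x. b x y)" for y
    unfolding b_def using H_diff
    by (intro continuous_on_blk_ip_comp differentiable_imp_continuous_on_UNIV[OF f_differentiable])
      (auto simp: vec_differentiable_def intro!: differentiable_imp_continuous_on_UNIV)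
  have ratio: "exp (- b x y\<^sub>1) / Z y\<^sub>1
      = exp (- b x y\<^sub>0) / Z y\<^sub>0 * exp (a (inv h x) y\<^sub>1 - a (inv h x) y\<^sub>0 - \<Gamma> y\<^sub>1 + \<Gamma> y\<^sub>0)" for x
  proof (rule pushforward_density_reweight[OF h_inv,
        where q="\<lambda>z. \<mu> z * exp (a z y\<^sub>0 - \<Gamma> y\<^sub>0)" and q'="\<lambda>z. \<mu> z * exp (a z y\<^sub>1 - \<Gamma> y\<^sub>1)"
          and p="\<lambda>x. exp (- b x y\<^sub>0) / Z y\<^sub>0" and p'="\<lambda>x. exp (- b x y\<^sub>1) / Z y\<^sub>1"])
    show "continuous_on UNIV h" "continuous_on UNIV (inv h)"
      using h_differentiable inv_h_differentiable by (auto intro: differentiable_imp_continuous_on_UNIV)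
    show "(\<lambda>z. \<mu> z * exp (a z y\<^sub>0 - \<Gamma> y\<^sub>0)) \<in> borel_measurable borel"
    proof (rule borel_measurable_times)
      show "\<mu> \<in> borel_measurable borel"
        using mu_meas by (simp add: measurable_lborel1)
      show "(\<lambda>z. exp (a z y\<^sub>0 - \<Gamma> y\<^sub>0)) \<in> borel_measurable borel"
        using a by (intro borel_measurable_continuous_onI continuous_intros)
    qed
  qed (use assms mu_nonneg model_x Z_pos[OF assms(1)] Z_pos[OF assms(2)] a b
      in \<open>auto simp: a_def b_def exp_add[symmetric] intro!: continuous_intros\<close>)
  show ?thesis
  proof (intro exI allI)
    fix z
    have "exp (- b (h z) y\<^sub>1) / Z y\<^sub>1 = exp (- b (h z) y\<^sub>0) / Z y\<^sub>0 * exp (a z y\<^sub>1 - a z y\<^sub>0 - \<Gamma> y\<^sub>1 + \<Gamma> y\<^sub>0)"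
      using ratio[of "h z"] h_inv by (simp add: bij_is_inj)
    then have "ln (exp (- b (h z) y\<^sub>1) / Z y\<^sub>1)
        = ln (exp (- b (h z) y\<^sub>0) / Z y\<^sub>0 * exp (a z y\<^sub>1 - a z y\<^sub>0 - \<Gamma> y\<^sub>1 + \<Gamma> y\<^sub>0))"
      by simp
    then have "- b (h z) y\<^sub>1 - ln (Z y\<^sub>1) = - b (h z) y\<^sub>0 - ln (Z y\<^sub>0) + (a z y\<^sub>1 - a z y\<^sub>0 - \<Gamma> y\<^sub>1 + \<Gamma> y\<^sub>0)"
      using Z_pos[OF assms(1)] Z_pos[OF assms(2)] by (simp add: ln_div ln_mult)
    then show "blk_ip k (\<lambda>i. T i (z $ i)) (\<lambda>i j. lam i y\<^sub>1 j - lam i y\<^sub>0 j)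
        = - blk_ip m (\<lambda>i. H i (f (h z) $ i)) (\<lambda>i j. g i y\<^sub>1 j - g i y\<^sub>0 j)
          + (\<Gamma> y\<^sub>1 - \<Gamma> y\<^sub>0 - ln (Z y\<^sub>1) + ln (Z y\<^sub>0))"
      by (simp add: blk_ip_diff a_def b_def)
  qed
qed

lemma stacked_T_affine_in_H:
  "\<exists>B e. \<forall>p\<in>block_indices k. \<forall>z.
     stacked T z p = (\<Sum>q\<in>block_indices m. B p q * stacked H (f (h z)) q) + e p"
proof -
  define K where "K = (\<Sum>i\<in>UNIV. k i)"
  define c where "c l = (\<lambda>(i, j). lam i (ys l) j - lam i (ys 0) j)" for l
  define d where "d l = (\<lambda>(i, j). g i (ys l) j - g i (ys 0) j)" for l
  have blk_ip_stacked: "blk_ip n (\<lambda>i. F i (x $ i)) v = (\<Sum>p\<in>block_indices n. (\<lambda>(i, j). v i j) p * stacked F x p)"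
    for n F x and v :: "'d \<Rightarrow> nat \<Rightarrow> real"
    by (simp add: blk_ip_block_indices split_def stacked_def mult.commute)
  have "\<forall>l\<in>{1..K}. \<exists>\<kappa>. \<forall>z. (\<Sum>p\<in>block_indices k. c l p * stacked T z p)
      = - (\<Sum>q\<in>block_indices m. d l q * stacked H (f (h z)) q) + \<kappa>"
    using natural_parameter_difference ys_in unfolding c_def d_def blk_ip_stacked
    by (simp add: K_def)
  then obtain \<kappa> where \<kappa>: "\<forall>l\<in>{1..K}. \<forall>z. (\<Sum>p\<in>block_indices k. c l p * stacked T z p)
      = - (\<Sum>q\<in>block_indices m. d l q * stacked H (f (h z)) q) + \<kappa> l"
    by metis
  obtain M where "\<forall>i j i' j'. j < k i \<longrightarrow> j' < k i' \<longrightarrow>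
      (\<Sum>l\<in>{1..K}. (lam i (ys l) j - lam i (ys 0) j) * M l i' j') = (if i = i' \<and> j = j' then 1 else 0)"
    using L_inv unfolding blk_matrix_invertible_def Let_def K_def by blast
  then have M: "\<forall>p\<in>block_indices k. \<forall>p'\<in>block_indices k.
      (\<Sum>l\<in>{1..K}. c l p * M l (fst p') (snd p')) = (if p = p' then 1 else 0)"
    by (auto simp: block_indices_def c_def)
  define B where "B p q = - (\<Sum>l\<in>{1..K}. M l (fst p) (snd p) * d l q)" for p q
  define e where "e p = (\<Sum>l\<in>{1..K}. M l (fst p) (snd p) * \<kappa> l)" for p
  have "stacked T z p = (\<Sum>q\<in>block_indices m. B p q * stacked H (f (h z)) q) + e p"
    if "p \<in> block_indices k" for p z
  proof -
    have "stacked T z p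
        = (\<Sum>l\<in>{1..K}. M l (fst p) (snd p) * (- (\<Sum>q\<in>block_indices m. d l q * stacked H (f (h z)) q) + \<kappa> l))"
      by (rule solve_by_left_inverse[OF _ that M]) (use \<kappa> in simp_all)
    also have "\<dots> = (\<Sum>q\<in>block_indices m. B p q * stacked H (f (h z)) q) + e p"
      by (simp add: B_def e_def algebra_simps sum.distrib sum_subtractf sum_negf sum_distrib_left
          sum_distrib_right sum.swap[of _ "block_indices m"])
    finally show ?thesis .
  qed
  then show ?thesis by blast
qed

lemma stacked_H_affine_in_T:
  obtains B C b where "inverse_matrices (block_indices k) (block_indices m) B C"
    and "\<forall>q\<in>block_indices m. \<forall>z. stacked H (f (h z)) q = (\<Sum>p\<in>block_indices k. C q p * stacked T z p) + b q"
proof -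
  obtain B e where affine: "\<forall>p\<in>block_indices k. \<forall>z.
      stacked T z p = (\<Sum>q\<in>block_indices m. B p q * stacked H (f (h z)) q) + e p"
    using stacked_T_affine_in_H by blast
  have "card (block_indices k) = card (block_indices m)"
    using m_perm card_block_indices_permute by metis
  moreover have "\<forall>p\<in>block_indices k. \<eta> p = 0"
    if "\<forall>q\<in>block_indices m. (\<Sum>p\<in>block_indices k. \<eta> p * B p q) = 0" for \<eta>
    using strong_exp_cond_affine_left_kernel[OF T_strong affine that] .
  ultimately obtain C where C: "inverse_matrices (block_indices k) (block_indices m) B C"
    using inverse_matrices_of_left_kernel[of "block_indices k" "block_indices m" B] by auto
  have "stacked H (f (h z)) q = (\<Sum>p\<in>block_indices k. C q p * stacked T z p) - (\<Sum>p\<in>block_indices k. C q p * e p)"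
    if "q \<in> block_indices m" for q z
  proof -
    have "stacked H (f (h z)) q = (\<Sum>p\<in>block_indices k. C q p * (stacked T z p - e p))"
      by (rule inverse_matrices_solve[OF C _ that]) (use affine in auto)
    then show ?thesis
      by (simp add: right_diff_distrib sum_subtractf)
  qed
  then show thesis
    by (intro that[OF C, of "\<lambda>q. - (\<Sum>p\<in>block_indices k. C q p * e p)"]) simp
qed

lemma H_chain_rule:
  assumes affine: "\<forall>q\<in>block_indices m. \<forall>z. stacked H (f (h z)) q = (\<Sum>p\<in>block_indices k. C q p * stacked T z p) + b q"
    and "j < m i"
  shows "deriv (\<lambda>v. H i v j) (f (h z) $ i) * deriv (\<lambda>t. f (h (z + t *\<^sub>R axis a 1)) $ i) 0
       = (\<Sum>l<k a. C (i, j) (a, l) * deriv (\<lambda>v. T a v l) (z $ a))"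
proof (rule stacked_affine_partial_derivative[where w="\<lambda>z. f (h z) $ i"])
  show "\<forall>z. H i (f (h z) $ i) j = (\<Sum>p\<in>block_indices k. C (i, j) p * stacked T z p) + b (i, j)"
    using bspec[OF affine, of "(i, j)"] assms(2) by simp
  have "(\<lambda>t::real. z + t *\<^sub>R axis a 1) differentiable (at 0)"
    by (intro differentiable_add differentiable_const differentiable_scaleR differentiable_ident)
  then have "(\<lambda>t. h (z + t *\<^sub>R axis a 1)) differentiable (at 0)"
    by (rule differentiable_compose[OF h_differentiable])
  then have "(\<lambda>t. f (h (z + t *\<^sub>R axis a 1))) differentiable (at 0)"
    by (rule differentiable_compose[OF f_differentiable])
  then have "(\<lambda>t. f (h (z + t *\<^sub>R axis a 1)) $ i) differentiable (at 0)"
    by (rule differentiable_compose[OF bounded_linear_imp_differentiable[OF bounded_linear_vec_nth]])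
  then show "((\<lambda>t. f (h (z + t *\<^sub>R axis a 1)) $ i) has_real_derivative deriv (\<lambda>t. f (h (z + t *\<^sub>R axis a 1)) $ i) 0) (at 0)"
    by (simp add: DERIV_deriv_iff_real_differentiable)
qed (use H_has_derivative T_has_derivative assms(2) in auto)

lemma H_single_block_if_vector_statistics:
  assumes "\<forall>l. 2 \<le> k l"
    and inverse: "inverse_matrices (block_indices k) (block_indices m) B C"
    and affine: "\<forall>q\<in>block_indices m. \<forall>z. stacked H (f (h z)) q = (\<Sum>p\<in>block_indices k. C q p * stacked T z p) + b q"
  shows "\<exists>c. \<forall>a. a \<noteq> c \<longrightarrow> (\<forall>j<m i. \<forall>l<k a. C (i, j) (a, l) = 0)"
proof (rule single_block_of_rank_one_derivatives[where n="m i" and C="\<lambda>j. C (i, j)"])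
  show "2 \<le> m i"
    using assms(1) m_perm by metis
  show "\<forall>z a. \<forall>j<m i. deriv (\<lambda>v. H i v j) (f (h z) $ i) * deriv (\<lambda>t. f (h (z + t *\<^sub>R axis a 1)) $ i) 0
      = (\<Sum>l<k a. C (i, j) (a, l) * deriv (\<lambda>v. T a v l) (z $ a))"
    using H_chain_rule[OF affine] by blast
  show "\<forall>\<eta>. (\<forall>p\<in>block_indices k. (\<Sum>j<m i. \<eta> j * C (i, j) p) = 0) \<longrightarrow> (\<forall>j<m i. \<eta> j = 0)"
  proof (intro allI impI)
    fix \<eta> j assume kernel: "\<forall>p\<in>block_indices k. (\<Sum>j<m i. \<eta> j * C (i, j) p) = 0" and "j < m i"
    define \<eta>' where "\<eta>' q = (if fst q = i then \<eta> (snd q) else 0)" for q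
    have "(\<Sum>q\<in>block_indices m. \<eta>' q * C q p) = (\<Sum>j<m i. \<eta> j * C (i, j) p)" for p
      by (subst sum_block_indices_single_block[of i]) (auto simp: \<eta>'_def)
    then have "\<eta>' (i, j) = 0"
      using inverse_matrices_left_kernel[OF inverse, of "(i, j)" \<eta>'] kernel \<open>j < m i\<close> by simp
    then show "\<eta> j = 0"
      by (simp add: \<eta>'_def)
  qed
qed (use T_strong T_has_derivative in auto)

lemma H_single_block_if_scalar_statistics:
  assumes "\<forall>l. k l = 1" "C1_diffeo f" "has_unique_extremum (\<lambda>v. H i v 0)"
    and affine: "\<forall>q\<in>block_indices m. \<forall>z. stacked H (f (h z)) q = (\<Sum>p\<in>block_indices k. C q p * stacked T z p) + b q"
  shows "\<exists>c. \<forall>a. a \<noteq> c \<longrightarrow> (\<forall>j<m i. \<forall>l<k a. C (i, j) (a, l) = 0)"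
proof -
  have "m i = 1"
    using assms(1) m_perm by metis
  obtain u where "is_local_extremum (\<lambda>v. H i v 0) u"
    using assms(3) unfolding has_unique_extremum_def by blast
  then have "deriv (\<lambda>v. H i v 0) u = 0"
    using local_extremum_derivative_zero H_has_derivative \<open>m i = 1\<close> by simp
  have critical: "\<forall>z a. f (h z) $ i = u \<longrightarrow> C (i, 0) (a, 0) * deriv (\<lambda>v. T a v 0) (z $ a) = 0"
  proof (intro allI impI)
    fix z a assume "f (h z) $ i = u"
    then show "C (i, 0) (a, 0) * deriv (\<lambda>v. T a v 0) (z $ a) = 0"
      using H_chain_rule[OF affine, of 0 i z a] \<open>deriv (\<lambda>v. H i v 0) u = 0\<close> \<open>m i = 1\<close> assms(1)
      by simp
  qed
  have "bij f" "continuous_on UNIV (inv f)"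
    using assms(2) by (auto simp: C1_diffeo_def intro!: differentiable_imp_continuous_on_UNIV C1_map_imp_differentiable)
  have "\<exists>c. \<forall>a. a \<noteq> c \<longrightarrow> C (i, 0) (a, 0) = 0"
  proof (rule single_block_of_critical_level_set[where W="\<lambda>z. f (h z)" and V="\<lambda>x. inv h (inv f x)"])
    show "\<forall>x. f (h (inv h (inv f x))) = x"
      using h_inv \<open>bij f\<close> by (simp add: bij_is_surj surj_f_inv_f)
    show "continuous_on UNIV (\<lambda>x. inv h (inv f x))"
      using continuous_on_compose2[OF differentiable_imp_continuous_on_UNIV[OF inv_h_differentiable]
          \<open>continuous_on UNIV (inv f)\<close>] by simp
    show "inj (\<lambda>x. inv h (inv f x))"
      using bij_imp_bij_inv[OF h_inv] bij_imp_bij_inv[OF \<open>bij f\<close>]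
      by (simp add: bij_is_inj inj_compose[unfolded comp_def])
  qed (use T_strong T_has_derivative critical assms(1) in auto)
  then show ?thesis
    using assms(1) \<open>m i = 1\<close> by auto
qed

lemma H_block_form:
  assumes inverse: "inverse_matrices (block_indices k) (block_indices m) B C"
    and affine: "\<forall>q\<in>block_indices m. \<forall>z. stacked H (f (h z)) q = (\<Sum>p\<in>block_indices k. C q p * stacked T z p) + b q"
    and single_block: "\<forall>i. \<exists>c. \<forall>a. a \<noteq> c \<longrightarrow> (\<forall>j<m i. \<forall>l<k a. C (i, j) (a, l) = 0)"
  shows "\<exists>\<gamma>. bij \<gamma> \<and> (\<forall>i. m i = k (\<gamma> i)) \<and>
           (\<exists>(A :: 'd \<Rightarrow> nat \<Rightarrow> nat \<Rightarrow> real) (b :: 'd \<Rightarrow> nat \<Rightarrow> real).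
              \<forall>i. sq_invertible (m i) (A i) \<and>
                  (\<forall>x. \<forall>j < m i. H i (f x $ i) j
                        = (\<Sum>l < k (\<gamma> i). A i j l * T (\<gamma> i) (inv h x $ \<gamma> i) l) + b i j))"
proof -
  obtain \<gamma> where support: "\<forall>i a. a \<noteq> \<gamma> i \<longrightarrow> (\<forall>j<m i. \<forall>l<k a. C (i, j) (a, l) = 0)"
    using single_block by metis
  have "bij \<gamma>"
    using block_support_bij[OF inverse _ support] k_pos by blast
  have diagonal: "inverse_matrices {..<m i} {..<k (\<gamma> i)} (\<lambda>j l. C (i, j) (\<gamma> i, l)) (\<lambda>l j. B (\<gamma> i, l) (i, j))" for i
    using block_support_diagonal_inverse[OF inverse bij_is_inj[OF \<open>bij \<gamma>\<close>] support] .
  have dims: "m i = k (\<gamma> i)" for i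
    using inverse_matrices_dim_eq[OF diagonal] .
  have "H i (f x $ i) j = (\<Sum>l<k (\<gamma> i). C (i, j) (\<gamma> i, l) * T (\<gamma> i) (inv h x $ \<gamma> i) l) + b (i, j)"
    if "j < m i" for i x j
  proof -
    have "H i (f x $ i) j = stacked H (f (h (inv h x))) (i, j)"
      using h_inv by (simp add: bij_is_surj surj_f_inv_f)
    also have "\<dots> = (\<Sum>p\<in>block_indices k. C (i, j) p * stacked T (inv h x) p) + b (i, j)"
      using bspec[OF affine, of "(i, j)"] that by simp
    also have "(\<Sum>p\<in>block_indices k. C (i, j) p * stacked T (inv h x) p)
        = (\<Sum>l<k (\<gamma> i). C (i, j) (\<gamma> i, l) * T (\<gamma> i) (inv h x $ \<gamma> i) l)"
      using support that by (subst sum_block_indices_single_block[of "\<gamma> i"]) auto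
    finally show ?thesis .
  qed
  moreover have "sq_invertible (m i) (\<lambda>j l. C (i, j) (\<gamma> i, l))" for i
    using diagonal[of i] by (intro sq_invertible_of_inverse_matrices) (simp add: dims[of i, symmetric])
  ultimately show ?thesis
    using \<open>bij \<gamma>\<close> dims
    by (intro exI[of _ \<gamma>] conjI exI[of _ "\<lambda>i j l. C (i, j) (\<gamma> i, l)"] exI[of _ "\<lambda>i j. b (i, j)"]) auto
qed

end

theorem mainTheorem9:
  fixes h f :: "real^'d::finite \<Rightarrow> real^'d"
    and k m :: "'d \<Rightarrow> nat"
    and T :: "'d \<Rightarrow> real \<Rightarrow> nat \<Rightarrow> real"
    and lam :: "'d \<Rightarrow> 'y::euclidean_space \<Rightarrow> nat \<Rightarrow> real"
    and \<mu> :: "real^'d \<Rightarrow> real"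
    and \<Gamma> :: "'y \<Rightarrow> real"
    and Y :: "'y set"
    and ys :: "nat \<Rightarrow> 'y"
    and H :: "'d \<Rightarrow> real \<Rightarrow> nat \<Rightarrow> real"
    and g :: "'d \<Rightarrow> 'y \<Rightarrow> nat \<Rightarrow> real"
    and Z :: "'y \<Rightarrow> real"
  assumes mu_meas: "\<mu> \<in> borel_measurable lborel"
    and mu_nonneg: "\<forall>z. \<mu> z \<ge> 0"
    and normaliser: "\<forall>y\<in>Y.
        integrable lborel (\<lambda>z. \<mu> z * exp (blk_ip k (\<lambda>i. T i (z $ i)) (\<lambda>i. lam i y))) \<and>
        (LINT z|lborel. \<mu> z * exp (blk_ip k (\<lambda>i. T i (z $ i)) (\<lambda>i. lam i y))) > 0 \<and>
        \<Gamma> y = ln (LINT z|lborel. \<mu> z * exp (blk_ip k (\<lambda>i. T i (z $ i)) (\<lambda>i. lam i y)))"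
    and h_inv: "bij h"
    and T_diff: "\<forall>i. vec_differentiable (k i) (T i)"
    and T_strong: "\<forall>i. strong_exp_cond (k i) (T i)"
    and ys_in: "\<forall>l \<le> (\<Sum>i\<in>UNIV. k i). ys l \<in> Y"
    and L_inv: "blk_matrix_invertible k (\<lambda>l i j. lam i (ys l) j - lam i (ys 0) j)"
    and H_diff: "\<forall>l. vec_differentiable (m l) (H l)"
    and m_perm: "\<exists>\<sigma>. bij \<sigma> \<and> (\<forall>i. m i = k (\<sigma> i))"
    and model_x: "\<forall>y\<in>Y.
        distr (density lborel (\<lambda>z. ennreal (\<mu> z * exp (blk_ip k (\<lambda>i. T i (z $ i)) (\<lambda>i. lam i y) - \<Gamma> y))))
              lborel h
        = density lborel (\<lambda>x. ennreal (exp (- blk_ip m (\<lambda>i. H i (f x $ i)) (\<lambda>i. g i y)) / Z y))"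
    and cases:
      "((\<forall>l. vec_twice_differentiable (k l) (T l) \<and> k l \<ge> 2) \<and> D2_diffeo h \<and> D2_diffeo f)
       \<or> ((\<forall>l. k l = 1 \<and> \<not> mono (\<lambda>u. T l u 0) \<and> \<not> antimono (\<lambda>u. T l u 0)) \<and>
          C1_diffeo h \<and> C1_diffeo f \<and> (\<forall>l. has_unique_extremum (\<lambda>v. H l v 0)))"
  shows "\<exists>\<gamma>. bij \<gamma> \<and> (\<forall>i. m i = k (\<gamma> i)) \<and>
           (\<exists>(A :: 'd \<Rightarrow> nat \<Rightarrow> nat \<Rightarrow> real) (b :: 'd \<Rightarrow> nat \<Rightarrow> real).
              \<forall>i. sq_invertible (m i) (A i) \<and>
                  (\<forall>x. \<forall>j < m i. H i (f x $ i) j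
                        = (\<Sum>l < k (\<gamma> i). A i j l * T (\<gamma> i) (inv h x $ \<gamma> i) l) + b i j))"
proof -
  have "2 \<le> k i \<or> k i = 1" for i
    using cases by blast
  then have regular: "(\<forall>x. h differentiable (at x)) \<and> (\<forall>x. inv h differentiable (at x)) \<and>
      (\<forall>x. f differentiable (at x)) \<and> (\<forall>i. 0 < k i)"
    using cases by (auto simp: D2_diffeo_def C1_diffeo_def intro: C1_map_imp_differentiable)
      (metis not_gr0 not_numeral_le_zero zero_neq_one)
  interpret imca_model h f k m T lam \<mu> \<Gamma> Y ys H g Z
    using assms regular by unfold_locales auto
  obtain B C b where inverse: "inverse_matrices (block_indices k) (block_indices m) B C"
    and affine: "\<forall>q\<in>block_indices m. \<forall>z. stacked H (f (h z)) q = (\<Sum>p\<in>block_indices k. C q p * stacked T z p) + b q"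
    by (rule stacked_H_affine_in_T)
  have "\<exists>c. \<forall>a. a \<noteq> c \<longrightarrow> (\<forall>j<m i. \<forall>l<k a. C (i, j) (a, l) = 0)" for i
    using cases H_single_block_if_vector_statistics[OF _ inverse affine]
      H_single_block_if_scalar_statistics[OF _ _ _ affine] by auto
  then show ?thesis
    using H_block_form[OF inverse affine] by blast
qed

end
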